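(* Let $n\ge3$ and let $b_1,\dots,b_n$ be positive integers; let $r=(b_1+\dots+b_n)-\max_j b_j$ be the degree of the $h$-polynomial of $R_{[\mathbf b]}$. (1) $r=2$ if and only if, up to permutation, $n=3$ and $[\mathbf b]=[1,1,b]$ with $b\ge1$; in this case the $h$-polynomial is $1+(3b+1)t+b^2t^2$. (2) $r=3$ if and only if, up to permutation, either $n=3$ and $[\mathbf b]=[1,2,b]$ with $b\ge2$, or $n=4$ and $[\mathbf b]=[1,1,1,b]$ with $b\ge1$. In the first case the $h$-vector is $h_0=1$, $h_1=5b+2$, $h_2=\frac{7b^2+b}{2}$, $h_3=\frac{b^2(b-1)}{2}$; in the second case it is $h_0=1$, $h_1=7b+4$, $h_2=6b^2+4b+1$, $h_3=b^3$.
   Context: Let $K$ be a field, $\mathcal M=\{0,\dots,b_1\}\times\dots\times\{0,\dots,b_n\}$, $S=K[T_v\mid v\in\mathcal M]$ standard graded, $\mathcal J_{[\mathbf b]}=\ker(T_v\mapsto x_{1,v_1}\cdots x_{n,v_n})$, $R_{[\mathbf b]}=S/\mathcal J_{[\mathbf b]}$ of Krull dimension $d=b_1+\dots+b_n+1$. The $h$-polynomial $h(t)=\sum_kh_kt^k$ is defined by $\sum_{l\ge0}\dim_K(R_{[\mathbf b]})_lt^l=h(t)/(1-t)^d$. *)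

theory Defs
  imports "HOL-Library.Multiset" "HOL-Computational_Algebra.Formal_Power_Series"
          "HOL-Computational_Algebra.Polynomial_FPS"
begin

text \<open>The multi-index [b] = [b_1,...,b_n] is a list bs of length n (0-based positions).
  The index set M = {0..b_1} x ... x {0..b_n} is the set of lists v of length n with v!i \<le> bs!i.\<close>
definition idx_set :: "nat list \<Rightarrow> nat list set" where
  "idx_set bs = {v. length v = length bs \<and> (\<forall>i<length bs. v ! i \<le> bs ! i)}"

text \<open>Monomials of degree l in S = K[T_v | v in M], represented as multisets over M of size l.\<close>
definition S_monomials :: "nat list \<Rightarrow> nat \<Rightarrow> nat list multiset set" where
  "S_monomials bs l = {m. set_mset m \<subseteq> idx_set bs \<and> size m = l}"

text \<open>The monomial map T_v \<mapsto> x_{1,v_1}...x_{n,v_n}; a monomial in the variables x_{i,j}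
  is represented as a multiset of pairs (i,j).\<close>
definition phi_mon :: "nat list \<Rightarrow> nat list multiset \<Rightarrow> (nat \<times> nat) multiset" where
  "phi_mon bs m = (\<Sum>v\<in>#m. mset (map (\<lambda>i. (i, v ! i)) [0..<length bs]))"

text \<open>dim_K (R_[b])_l: the degree-l component of S/J_[b] is isomorphic to the K-span of the
  images of the degree-l monomials of S; these images are monomials in the x_{i,j}, which are
  linearly independent, so the dimension is the number of distinct image monomials.\<close>
definition hilb_fun :: "nat list \<Rightarrow> nat \<Rightarrow> nat" where
  "hilb_fun bs l = card (phi_mon bs ` S_monomials bs l)"

definition hilb_series :: "nat list \<Rightarrow> rat fps" where
  "hilb_series bs = Abs_fps (\<lambda>l. of_nat (hilb_fun bs l))"

definition krull_dim :: "nat list \<Rightarrow> nat" where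
  "krull_dim bs = sum_list bs + 1"

definition is_h_poly :: "nat list \<Rightarrow> rat poly \<Rightarrow> bool" where
  "is_h_poly bs h \<longleftrightarrow> fps_of_poly h = hilb_series bs * (1 - fps_X) ^ krull_dim bs"

definition r_deg :: "nat list \<Rightarrow> nat" where
  "r_deg bs = sum_list bs - Max (set bs)"

end

theory Submission
  imports Defs
begin

text \<open>Each monomial of S is sent to the x-monomial recording, for every coordinate i, the multiset
  of i-th entries of its variables, and every tuple of size-l multisets on the sets {0..b_i} arises;
  so dim (R_[b])_l is the product of the binomials C(b_i + l, b_i). If the Hilbert function is
  P(l) C(b + l, b) with P(l) = sum_{i<=k} c_i C(l, i), then the identity
  sum_l C(b + l, b) C(l, i) t^l = C(b + i, i) t^i / (1 - t)^(b+i+1) gives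
  h(t) = sum_i c_i C(b + i, i) t^i (1 - t)^(k-i), which for [1,1,b], [1,2,b] and [1,1,1,b] is a
  direct computation. The characterisation of r = 2, 3 is elementary: removing one maximal entry
  leaves at least two positive entries with sum r.\<close>

definition tagged_union :: "'a multiset list \<Rightarrow> (nat \<times> 'a) multiset" where
  "tagged_union Ms = (\<Sum>i<length Ms. image_mset (Pair i) (Ms ! i))"

lemma tagged_union_component:
  assumes "i < length Ms"
  shows "image_mset snd (filter_mset (\<lambda>p. fst p = i) (tagged_union Ms)) = Ms ! i"
proof -
  have "filter_mset (\<lambda>p. fst p = i) (tagged_union Ms) =
          (\<Sum>j<length Ms. filter_mset (\<lambda>p. fst p = i) (image_mset (Pair j) (Ms ! j)))"
    unfolding tagged_union_def by (rule sum_comp_morphism[symmetric, unfolded comp_def]) simp_all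
  also have "\<dots> = (\<Sum>j<length Ms. if j = i then image_mset (Pair i) (Ms ! i) else {#})"
    by (rule sum.cong) (auto simp: filter_mset_image_mset comp_def filter_mset_eq_mempty_iff)
  also have "\<dots> = image_mset (Pair i) (Ms ! i)"
    using assms by simp
  finally show ?thesis
    by (simp add: image_mset.compositionality comp_def)
qed

lemma inj_on_tagged_union: "inj_on tagged_union {Ms. length Ms = n}"
  by (rule inj_on_inverseI
        [where g = "\<lambda>M. map (\<lambda>i. image_mset snd (filter_mset (\<lambda>p. fst p = i) M)) [0..<n]"])
     (auto intro: nth_equalityI simp: tagged_union_component)

definition marginals :: "nat list \<Rightarrow> nat list multiset \<Rightarrow> nat multiset list" where
  "marginals bs m = map (\<lambda>i. image_mset (\<lambda>v. v ! i) m) [0..<length bs]"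

lemma phi_mon_eq_tagged_union: "phi_mon bs m = tagged_union (marginals bs m)"
proof (induction m)
  case empty
  show ?case by (simp add: phi_mon_def tagged_union_def marginals_def)
next
  case (add v m)
  have "mset (map (\<lambda>i. (i, v ! i)) [0..<n]) = (\<Sum>i<n. {#(i, v ! i)#})" for n
    by (induction n) auto
  then have "phi_mon bs (add_mset v m) = (\<Sum>i<length bs. {#(i, v ! i)#}) + phi_mon bs m"
    by (simp add: phi_mon_def)
  also have "\<dots> = tagged_union (marginals bs (add_mset v m))"
    using add by (simp add: tagged_union_def marginals_def sum.distrib[symmetric])
  finally show ?case .
qed

lemma hilb_fun_eq_card_marginals: "hilb_fun bs l = card (marginals bs ` S_monomials bs l)"
proof -
  have "inj_on tagged_union (marginals bs ` S_monomials bs l)"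
    by (rule inj_on_subset[OF inj_on_tagged_union]) (auto simp: marginals_def)
  moreover have "phi_mon bs ` S_monomials bs l = tagged_union ` marginals bs ` S_monomials bs l"
    by (simp add: image_image phi_mon_eq_tagged_union)
  ultimately show ?thesis
    by (simp add: hilb_fun_def card_image)
qed

lemma in_listset_iff:
  "xs \<in> listset As \<longleftrightarrow> length xs = length As \<and> (\<forall>i<length As. xs ! i \<in> As ! i)"
proof (induction As arbitrary: xs)
  case (Cons A As)
  then show ?case
    by (cases xs) (auto simp: set_Cons_def All_less_Suc2)
qed simp

lemma card_listset: "card (listset As) = (\<Prod>A\<leftarrow>As. card A)"
proof (induction As)
  case (Cons A As)
  have "set_Cons A (listset As) = case_prod Cons ` (A \<times> listset As)"
    by (auto simp: set_Cons_def)
  moreover have "inj_on (case_prod Cons) (A \<times> listset As)"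
    by (auto intro: inj_onI)
  ultimately show ?case
    using Cons by (simp add: card_image card_cartesian_product)
qed simp

lemma marginals_image:
  "marginals bs ` S_monomials bs l = listset (map (\<lambda>b. multisets_of_size {0..b} l) bs)"
proof
  show "marginals bs ` S_monomials bs l \<subseteq> listset (map (\<lambda>b. multisets_of_size {0..b} l) bs)"
  proof
    fix Ms assume "Ms \<in> marginals bs ` S_monomials bs l"
    then obtain m where m: "m \<in> S_monomials bs l" and Ms: "Ms = marginals bs m"
      by blast
    have "Ms ! i \<in> multisets_of_size {0..bs ! i} l" if i: "i < length bs" for i
    proof -
      have "\<forall>v\<in>#m. v ! i \<le> bs ! i"
        using m i by (auto simp: S_monomials_def idx_set_def)
      then show ?thesis
        using m i by (auto simp: Ms marginals_def multisets_of_size_def S_monomials_def)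
    qed
    then show "Ms \<in> listset (map (\<lambda>b. multisets_of_size {0..b} l) bs)"
      by (simp add: in_listset_iff Ms marginals_def)
  qed
next
  show "listset (map (\<lambda>b. multisets_of_size {0..b} l) bs) \<subseteq> marginals bs ` S_monomials bs l"
  proof
    fix Ms assume "Ms \<in> listset (map (\<lambda>b. multisets_of_size {0..b} l) bs)"
    then have len: "length Ms = length bs"
      and Ms: "\<And>i. i < length bs \<Longrightarrow>
                 set_mset (Ms ! i) \<subseteq> {0..bs ! i} \<and> size (Ms ! i) = l"
      by (auto simp: in_listset_iff multisets_of_size_def)
    define s where "s i = sorted_list_of_multiset (Ms ! i)" for i
    define m where "m = mset (map (\<lambda>k. map (\<lambda>i. s i ! k) [0..<length bs]) [0..<l])"
    have s: "length (s i) = l" "set (s i) \<subseteq> {0..bs ! i}" if "i < length bs" for i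
      using Ms[OF that] by (auto simp: s_def simp flip: size_mset)
    have "marginals bs m = Ms"
    proof (rule nth_equalityI)
      fix i assume "i < length (marginals bs m)"
      then have i: "i < length bs" by (simp add: marginals_def)
      then have "marginals bs m ! i = mset (map (\<lambda>k. s i ! k) [0..<l])"
        by (simp add: marginals_def m_def image_mset.compositionality comp_def)
      also have "\<dots> = Ms ! i"
        using s(1)[OF i] by (metis map_nth mset_sorted_list_of_multiset s_def)
      finally show "marginals bs m ! i = Ms ! i" .
    qed (simp add: marginals_def len)
    moreover have "v \<in> idx_set bs" if "v \<in># m" for v
    proof -
      obtain k where "k < l" "v = map (\<lambda>i. s i ! k) [0..<length bs]"
        using \<open>v \<in># m\<close> by (auto simp: m_def)
      then show ?thesis
        using s by (auto simp: idx_set_def subset_iff)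
    qed
    then have "m \<in> S_monomials bs l"
      by (auto simp: S_monomials_def m_def)
    ultimately show "Ms \<in> marginals bs ` S_monomials bs l" by blast
  qed
qed

lemma hilb_fun_prod: "hilb_fun bs l = (\<Prod>b\<leftarrow>bs. (b + l) choose b)"
proof -
  have "card (multisets_of_size {0..b} l) = (b + l) choose b" for b
    using binomial_symmetric[of b "b + l"] by (simp add: card_multisets_of_size)
  then show ?thesis
    by (simp add: hilb_fun_eq_card_marginals marginals_image card_listset comp_def)
qed

definition neg_binomial_fps :: "nat \<Rightarrow> 'a::comm_ring_1 fps" where
  "neg_binomial_fps k = Abs_fps (\<lambda>n. of_nat ((k + n) choose k))"

lemma neg_binomial_fps_Suc_mult: "neg_binomial_fps (Suc k) * (1 - fps_X) = neg_binomial_fps k"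
proof (rule fps_ext)
  fix n
  show "fps_nth (neg_binomial_fps (Suc k) * (1 - fps_X)) n =
          fps_nth (neg_binomial_fps k :: 'a fps) n"
  proof (cases n)
    case (Suc j)
    have "(Suc k + Suc j) choose Suc k = ((Suc k + j) choose Suc k) + ((k + Suc j) choose k)"
      by simp
    then show ?thesis using Suc by (simp add: neg_binomial_fps_def algebra_simps)
  qed (simp add: neg_binomial_fps_def binomial_eq_0)
qed

lemma neg_binomial_fps_mult_power: "neg_binomial_fps k * (1 - fps_X) ^ Suc k = 1"
proof (induction k)
  case 0
  show ?case by (rule fps_ext) (simp add: neg_binomial_fps_def algebra_simps)
next
  case (Suc k)
  have "neg_binomial_fps (Suc k) * (1 - fps_X) ^ Suc (Suc k) =
          (neg_binomial_fps (Suc k) * (1 - fps_X)) * (1 - fps_X :: 'a fps) ^ Suc k"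
    by (simp only: power_Suc mult_ac)
  then show ?case
    by (simp only: neg_binomial_fps_Suc_mult Suc.IH)
qed

lemma binomial_times_binomial_fps:
  "Abs_fps (\<lambda>n. of_nat (((b + n) choose b) * (n choose i)) :: 'a::comm_ring_1) =
     fps_const (of_nat ((b + i) choose i)) * fps_X ^ i * neg_binomial_fps (b + i)"
proof (rule fps_ext)
  fix n
  show "fps_nth (Abs_fps (\<lambda>n. of_nat (((b + n) choose b) * (n choose i)) :: 'a)) n =
     fps_nth (fps_const (of_nat ((b + i) choose i)) * fps_X ^ i * neg_binomial_fps (b + i)) n"
  proof (cases "i \<le> n")
    case True
    then obtain j where n: "n = i + j" using le_Suc_ex by blast
    have "((b + n) choose b) * (n choose i) = ((b + i) choose i) * ((b + i + j) choose (b + i))"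
      using choose_mult[of j n "b + n"] n binomial_symmetric[of i n]
        binomial_symmetric[of b "b + n"] binomial_symmetric[of "b + i" "b + i + j"]
      by (simp add: algebra_simps)
    then show ?thesis
      by (simp add: n fps_X_power_mult_nth neg_binomial_fps_def mult.assoc flip: of_nat_mult)
  qed (simp add: mult.assoc fps_X_power_mult_nth binomial_eq_0 not_le)
qed

lemma fps_of_poly_one_minus_X: "fps_of_poly [:1, -1:] = (1 - fps_X :: 'a::field fps)"
  by (simp add: fps_of_poly_linear')

definition h_poly_of_binomial_coeffs :: "nat \<Rightarrow> nat \<Rightarrow> (nat \<Rightarrow> rat) \<Rightarrow> rat poly" where
  "h_poly_of_binomial_coeffs b k c =
     (\<Sum>i\<le>k. smult (c i * of_nat ((b + i) choose i)) (monom 1 i * [:1, -1:] ^ (k - i)))"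

lemma is_h_poly_binomial_basis:
  fixes c :: "nat \<Rightarrow> rat"
  assumes dim: "krull_dim bs = b + k + 1"
    and hilb: "\<And>n. of_nat (hilb_fun bs n) =
                 (\<Sum>i\<le>k. c i * of_nat (n choose i)) * of_nat ((b + n) choose b)"
  shows "is_h_poly bs (h_poly_of_binomial_coeffs b k c)"
proof -
  have "hilb_series bs =
      (\<Sum>i\<le>k. fps_const (c i) * Abs_fps (\<lambda>n. of_nat (((b + n) choose b) * (n choose i))))"
    by (rule fps_ext) (simp add: hilb_series_def hilb fps_sum_nth sum_distrib_left mult_ac)
  also have "\<dots> = (\<Sum>i\<le>k. fps_const (c i) *
                   (fps_const (of_nat ((b + i) choose i)) * fps_X ^ i * neg_binomial_fps (b + i)))"
    by (simp only: binomial_times_binomial_fps)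
  finally have series: "hilb_series bs = \<dots>" .
  have summand: "fps_const (c i) *
          (fps_const (of_nat ((b + i) choose i)) * fps_X ^ i * neg_binomial_fps (b + i)) *
          (1 - fps_X) ^ (b + k + 1)
      = fps_const (c i * of_nat ((b + i) choose i)) * fps_X ^ i * (1 - fps_X) ^ (k - i)"
    if "i \<le> k" for i
  proof -
    have "b + k + 1 = Suc (b + i) + (k - i)"
      using that by simp
    then have "fps_const (c i) *
          (fps_const (of_nat ((b + i) choose i)) * fps_X ^ i * neg_binomial_fps (b + i)) *
          (1 - fps_X) ^ (b + k + 1)
      = fps_const (c i) * fps_const (of_nat ((b + i) choose i)) * fps_X ^ i *
          (neg_binomial_fps (b + i) * (1 - fps_X) ^ Suc (b + i)) * (1 - fps_X) ^ (k - i)"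
      by (simp only: power_add mult_ac)
    then show ?thesis
      by (simp add: neg_binomial_fps_mult_power fps_const_mult del: power_Suc)
  qed
  have "hilb_series bs * (1 - fps_X) ^ (b + k + 1) =
      (\<Sum>i\<le>k. fps_const (c i * of_nat ((b + i) choose i)) * fps_X ^ i * (1 - fps_X) ^ (k - i))"
    unfolding series sum_distrib_right by (rule sum.cong[OF refl], rule summand) simp
  then show ?thesis
    by (simp add: is_h_poly_def h_poly_of_binomial_coeffs_def dim fps_of_poly_sum fps_of_poly_smult
        fps_of_poly_mult fps_of_poly_monom' fps_of_poly_power fps_of_poly_one_minus_X mult.assoc
        del: power_Suc)
qed

lemma of_nat_choose_two:
  "of_nat (n choose 2) = (of_nat n * (of_nat n - 1) / 2 :: 'a::field_char_0)"
  by (simp add: binomial_gbinomial gbinomial_Suc numeral_2_eq_2)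

lemma of_nat_choose_three:
  "of_nat (n choose 3) = (of_nat n * (of_nat n - 1) * (of_nat n - 2) / 6 :: 'a::field_char_0)"
  by (simp add: binomial_gbinomial gbinomial_Suc numeral_3_eq_3 field_simps)

text \<open>The coefficients below are the iterated forward differences at 0 of the polynomial factor of
  the Hilbert function, e.g. (n + 1)^2 = 1 + 3 C(n, 1) + 2 C(n, 2).\<close>

lemma is_h_poly_1_1_b:
  assumes "mset bs = {#1, 1, b#}"
  shows "is_h_poly bs [:1, of_nat (3 * b + 1), of_nat (b ^ 2):]"
proof -
  have "is_h_poly bs (h_poly_of_binomial_coeffs b 2 (nth [1, 3, 2]))"
  proof (rule is_h_poly_binomial_basis)
    show "krull_dim bs = b + 2 + 1"
      using assms by (simp add: krull_dim_def flip: sum_mset_sum_list)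
    show "(of_nat (hilb_fun bs n) :: rat) =
            (\<Sum>i\<le>2. [1, 3, 2] ! i * of_nat (n choose i)) * of_nat ((b + n) choose b)" for n
      using assms
      by (simp add: hilb_fun_prod atMost_nat_numeral of_nat_choose_two field_simps
               flip: prod_mset_prod_list)
  qed
  also have "h_poly_of_binomial_coeffs b 2 (nth [1, 3, 2]) = [:1, of_nat (3 * b + 1), of_nat (b ^ 2):]"
    by (simp add: h_poly_of_binomial_coeffs_def atMost_nat_numeral of_nat_choose_two monom_altdef
        power2_eq_square field_simps)
  finally show ?thesis .
qed

lemma is_h_poly_1_2_b:
  assumes "mset bs = {#1, 2, b#}"
  shows "is_h_poly bs [:1, 5 * of_nat b + 2, (7 * of_nat b ^ 2 + of_nat b) / 2,
                        (of_nat b ^ 2 * (of_nat b - 1)) / 2:]"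
proof -
  have "is_h_poly bs (h_poly_of_binomial_coeffs b 3 (nth [1, 5, 7, 3]))"
  proof (rule is_h_poly_binomial_basis)
    show "krull_dim bs = b + 3 + 1"
      using assms by (simp add: krull_dim_def flip: sum_mset_sum_list)
    show "(of_nat (hilb_fun bs n) :: rat) =
            (\<Sum>i\<le>3. [1, 5, 7, 3] ! i * of_nat (n choose i)) * of_nat ((b + n) choose b)" for n
      using assms
      by (simp add: hilb_fun_prod atMost_nat_numeral of_nat_choose_two of_nat_choose_three
               field_simps flip: prod_mset_prod_list)
  qed
  also have "h_poly_of_binomial_coeffs b 3 (nth [1, 5, 7, 3]) =
      [:1, 5 * of_nat b + 2, (7 * of_nat b ^ 2 + of_nat b) / 2, (of_nat b ^ 2 * (of_nat b - 1)) / 2:]"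
    by (simp add: h_poly_of_binomial_coeffs_def atMost_nat_numeral of_nat_choose_two
        of_nat_choose_three monom_altdef power2_eq_square power3_eq_cube field_simps)
  finally show ?thesis .
qed

lemma is_h_poly_1_1_1_b:
  assumes "mset bs = {#1, 1, 1, b#}"
  shows "is_h_poly bs [:1, 7 * of_nat b + 4, 6 * of_nat b ^ 2 + 4 * of_nat b + 1, of_nat b ^ 3:]"
proof -
  have "is_h_poly bs (h_poly_of_binomial_coeffs b 3 (nth [1, 7, 12, 6]))"
  proof (rule is_h_poly_binomial_basis)
    show "krull_dim bs = b + 3 + 1"
      using assms by (simp add: krull_dim_def flip: sum_mset_sum_list)
    show "(of_nat (hilb_fun bs n) :: rat) =
            (\<Sum>i\<le>3. [1, 7, 12, 6] ! i * of_nat (n choose i)) * of_nat ((b + n) choose b)" for n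
      using assms
      by (simp add: hilb_fun_prod atMost_nat_numeral of_nat_choose_two of_nat_choose_three
               field_simps flip: prod_mset_prod_list)
  qed
  also have "h_poly_of_binomial_coeffs b 3 (nth [1, 7, 12, 6]) =
      [:1, 7 * of_nat b + 4, 6 * of_nat b ^ 2 + 4 * of_nat b + 1, of_nat b ^ 3:]"
    by (simp add: h_poly_of_binomial_coeffs_def atMost_nat_numeral of_nat_choose_two
        of_nat_choose_three monom_altdef power2_eq_square power3_eq_cube field_simps)
  finally show ?thesis .
qed

lemma r_deg_add_mset_Max:
  assumes "mset bs = add_mset b M" and "\<forall>x\<in>#M. x \<le> b"
  shows "r_deg bs = sum_mset M"
proof -
  have "set bs = insert b (set_mset M)"
    using assms(1) by (metis set_mset_add_mset_insert set_mset_mset)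
  then have "Max (set bs) = b"
    using assms(2) by (auto intro: Max_eqI)
  moreover have "sum_list bs = b + sum_mset M"
    using assms(1) by (metis sum_mset.add_mset sum_mset_sum_list)
  ultimately show ?thesis
    by (simp add: r_deg_def)
qed

lemma r_deg_split_Max:
  assumes "bs \<noteq> []"
  obtains xs where "mset bs = add_mset (Max (set bs)) (mset xs)" "r_deg bs = sum_list xs"
    and "length xs = length bs - 1" "set xs \<subseteq> set bs" "\<forall>x\<in>set xs. x \<le> Max (set bs)"
proof
  let ?xs = "remove1 (Max (set bs)) bs"
  show ms: "mset bs = add_mset (Max (set bs)) (mset ?xs)"
    using assms by simp
  show sub: "set ?xs \<subseteq> set bs"
    by (rule set_remove1_subset)
  show max: "\<forall>x\<in>set ?xs. x \<le> Max (set bs)"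
    using sub by (meson List.finite_set Max_ge subsetD)
  then show "r_deg bs = sum_list ?xs"
    using r_deg_add_mset_Max[OF ms] by (simp only: set_mset_mset sum_mset_sum_list)
  show "length ?xs = length bs - 1"
    using assms by (simp add: length_remove1)
qed

lemma length_le_sum_list: "\<forall>x\<in>set xs. (x::nat) > 0 \<Longrightarrow> length xs \<le> sum_list xs"
  by (induction xs) auto

lemma r_deg_eq_2_iff:
  assumes len: "length bs \<ge> 3" and pos: "\<forall>x\<in>set bs. x > 0"
  shows "r_deg bs = 2 \<longleftrightarrow> (\<exists>b\<ge>1. mset bs = {#1, 1, b#})"
proof
  assume r: "r_deg bs = 2"
  from len have "bs \<noteq> []"
    by auto
  then obtain xs where xs: "mset bs = add_mset (Max (set bs)) (mset xs)" "r_deg bs = sum_list xs"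
    "length xs = length bs - 1" "set xs \<subseteq> set bs"
    and max_ge: "\<forall>x\<in>set xs. x \<le> Max (set bs)"
    by (rule r_deg_split_Max)
  have xs_pos: "\<forall>x\<in>set xs. x > 0"
    using xs(4) pos by auto
  have "length xs = 2"
    using length_le_sum_list[OF xs_pos] r xs(2,3) len by simp
  then obtain x y where "xs = [x, y]"
    by (auto simp: numeral_2_eq_2 length_Suc_conv)
  with xs_pos r xs(2) have "xs = [1, 1]"
    by auto
  with xs(1) max_ge show "\<exists>b\<ge>1. mset bs = {#1, 1, b#}"
    by (auto simp: add_mset_commute intro!: exI[of _ "Max (set bs)"])
next
  assume "\<exists>b\<ge>1. mset bs = {#1, 1, b#}"
  then obtain b where "b \<ge> 1" "mset bs = add_mset b {#1, 1#}"
    by (auto simp: add_mset_commute)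
  then show "r_deg bs = 2"
    by (subst r_deg_add_mset_Max) auto
qed

lemma r_deg_eq_3_iff:
  assumes len: "length bs \<ge> 3" and pos: "\<forall>x\<in>set bs. x > 0"
  shows "r_deg bs = 3 \<longleftrightarrow>
           (\<exists>b\<ge>2. mset bs = {#1, 2, b#}) \<or> (\<exists>b\<ge>1. mset bs = {#1, 1, 1, b#})"
proof
  assume r: "r_deg bs = 3"
  from len have "bs \<noteq> []"
    by auto
  then obtain xs where xs: "mset bs = add_mset (Max (set bs)) (mset xs)" "r_deg bs = sum_list xs"
    "length xs = length bs - 1" "set xs \<subseteq> set bs"
    and max_ge: "\<forall>x\<in>set xs. x \<le> Max (set bs)"
    by (rule r_deg_split_Max)
  have xs_pos: "\<forall>x\<in>set xs. x > 0"
    using xs(4) pos by auto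
  have "length xs = 2 \<or> length xs = 3"
    using length_le_sum_list[OF xs_pos] r xs(2,3) len by auto
  then show "(\<exists>b\<ge>2. mset bs = {#1, 2, b#}) \<or> (\<exists>b\<ge>1. mset bs = {#1, 1, 1, b#})"
  proof
    assume "length xs = 2"
    then obtain x y where xy: "xs = [x, y]"
      by (auto simp: numeral_2_eq_2 length_Suc_conv)
    with xs_pos r xs(2) have "x = 1 \<and> y = 2 \<or> x = 2 \<and> y = 1"
      by auto
    with xy xs(1) max_ge show ?thesis
      by (auto simp: add_mset_commute intro!: exI[of _ "Max (set bs)"] disjI1)
  next
    assume "length xs = 3"
    then obtain x y z where "xs = [x, y, z]"
      by (auto simp: numeral_3_eq_3 length_Suc_conv)
    with xs_pos r xs(2) have "xs = [1, 1, 1]"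
      by auto
    with xs(1) max_ge show ?thesis
      by (auto simp: add_mset_commute intro!: exI[of _ "Max (set bs)"] disjI2)
  qed
next
  assume "(\<exists>b\<ge>2. mset bs = {#1, 2, b#}) \<or> (\<exists>b\<ge>1. mset bs = {#1, 1, 1, b#})"
  then obtain b M where "mset bs = add_mset b M" "\<forall>x\<in>#M. x \<le> b" "sum_mset M = 3"
    by (auto simp: add_mset_commute)
  then show "r_deg bs = 3"
    by (simp add: r_deg_add_mset_Max)
qed

theorem mainTheorem6:
  fixes bs :: "nat list"
  assumes "length bs \<ge> 3"
    and "\<forall>x\<in>set bs. x > 0"
  shows "(r_deg bs = 2 \<longleftrightarrow> (\<exists>b\<ge>1. mset bs = {#1, 1, b#}))
    \<and> (\<forall>b\<ge>1. mset bs = {#1, 1, b#} \<longrightarrow>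
         is_h_poly bs [:1, of_nat (3 * b + 1), of_nat (b ^ 2):])
    \<and> (r_deg bs = 3 \<longleftrightarrow>
         (\<exists>b\<ge>2. mset bs = {#1, 2, b#}) \<or> (\<exists>b\<ge>1. mset bs = {#1, 1, 1, b#}))
    \<and> (\<forall>b\<ge>2. mset bs = {#1, 2, b#} \<longrightarrow>
         is_h_poly bs [:1, 5 * of_nat b + 2, (7 * of_nat b ^ 2 + of_nat b) / 2,
                        (of_nat b ^ 2 * (of_nat b - 1)) / 2:])
    \<and> (\<forall>b\<ge>1. mset bs = {#1, 1, 1, b#} \<longrightarrow>
         is_h_poly bs [:1, 7 * of_nat b + 4, 6 * of_nat b ^ 2 + 4 * of_nat b + 1, of_nat b ^ 3:])"
proof (intro conjI)
  show "r_deg bs = 2 \<longleftrightarrow> (\<exists>b\<ge>1. mset bs = {#1, 1, b#})"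
    using r_deg_eq_2_iff[OF assms] .
  show "r_deg bs = 3 \<longleftrightarrow>
         (\<exists>b\<ge>2. mset bs = {#1, 2, b#}) \<or> (\<exists>b\<ge>1. mset bs = {#1, 1, 1, b#})"
    using r_deg_eq_3_iff[OF assms] .
qed (blast intro: is_h_poly_1_1_b is_h_poly_1_2_b is_h_poly_1_1_1_b)+

end
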